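(* Let $G$ be a digraph and let $\alpha^{(n+1)}>\gamma^{(n)}>\beta^{(n-1)}$ be allowed elementary paths on $G$ (of lengths $n+1,n,n-1$) such that their starting vertices are not all the same or their end vertices are not all the same. Write $\alpha=v_0v_1\cdots v_{n+1}$. Then either (a) there exists an allowed elementary $n$-path $\gamma'\neq\gamma$ with $\alpha>\gamma'>\beta$; or (b) $\beta$ is obtained from $\alpha$ by removing $v_0\to v_1$ or by removing $v_n\to v_{n+1}$.
   Context: A digraph $G=(V,E)$ consists of a set $V$ and $E\subseteq(V\times V)\setminus\{(v,v)\}$; $(u,v)\in E$ is written $u\to v$. An allowed elementary $n$-path is a sequence $v_0\cdots v_n$ of vertices with $v_{i-1}\to v_i\in E$ for $1\le i\le n$. For allowed elementary paths, $\gamma'<\gamma$ (equivalently $\gamma>\gamma'$) means $\gamma'$ is obtained from $\gamma$ by deleting some of its entries. *)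

theory Defs
  imports Main "HOL-Library.Sublist"
begin

definition digraph :: "'a set \<Rightarrow> ('a \<times> 'a) set \<Rightarrow> bool" where
  "digraph V E \<longleftrightarrow> E \<subseteq> (V \<times> V) - {(v, v) | v. True}"

definition allowed_path :: "'a set \<Rightarrow> ('a \<times> 'a) set \<Rightarrow> nat \<Rightarrow> 'a list \<Rightarrow> bool" where
  "allowed_path V E k p \<longleftrightarrow> length p = k + 1 \<and> set p \<subseteq> V \<and>
     (\<forall>i<k. (p ! i, p ! (i + 1)) \<in> E)"

definition path_less :: "'a list \<Rightarrow> 'a list \<Rightarrow> bool" where
  "path_less g' g \<longleftrightarrow> subseq g' g \<and> g' \<noteq> g"

end

theory Submission
  imports Defs
begin

text \<open>Both \<open>\<gamma>\<close> and \<open>\<beta>\<close> arise from \<open>\<alpha>\<close> by deleting single entries, so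
  \<open>\<beta>\<close> is \<open>\<alpha>\<close> with two positions \<open>a < b\<close> removed and \<open>\<gamma>\<close> is \<open>\<alpha>\<close> with one of
  them removed. If \<open>a\<close> and \<open>b\<close> are not adjacent, the edges of \<open>\<beta>\<close> bridge each
  deleted vertex separately, so removing only the other one gives a second allowed path
  \<open>\<gamma>'\<close>; it differs from \<open>\<gamma>\<close> because the digraph has no loops. If \<open>b = a + 1\<close>,
  either the removed edge \<open>v\<^sub>a \<rightarrow> v\<^sub>a\<^sub>+\<^sub>1\<close> is the first or the last edge of \<open>\<alpha>\<close>,
  or all three paths share both end vertices, which is excluded.\<close>

definition del_at :: "nat \<Rightarrow> 'a list \<Rightarrow> 'a list" where
  "del_at i xs = take i xs @ drop (Suc i) xs"

lemma length_del_at [simp]: "i < length xs \<Longrightarrow> length (del_at i xs) = length xs - 1"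
  unfolding del_at_def by auto

lemma nth_del_at:
  "Suc k < length xs \<Longrightarrow> del_at i xs ! k = (if k < i then xs ! k else xs ! Suc k)"
  unfolding del_at_def by (auto simp: nth_append min_def)

lemma hd_del_at: "0 < i \<Longrightarrow> hd (del_at i xs) = hd xs"
  unfolding del_at_def by (cases xs) auto

lemma last_del_at: "Suc i < length xs \<Longrightarrow> last (del_at i xs) = last xs"
  unfolding del_at_def by simp

lemma subseq_del_at: "subseq (del_at i xs) xs"
proof -
  have "subseq (drop (Suc i) xs) (drop i xs)"
    by (cases "i < length xs") (auto simp: Cons_nth_drop_Suc[symmetric])
  then show ?thesis
    unfolding del_at_def by (metis append_take_drop_id subseq_append')
qed

lemma path_less_del_at:
  assumes "i < length xs"
  shows "path_less (del_at i xs) xs"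
proof -
  have "length (del_at i xs) \<noteq> length xs" using assms by simp
  then show ?thesis unfolding path_less_def using subseq_del_at by metis
qed

lemma del_at_del_at:
  "a < b \<Longrightarrow> b < length xs \<Longrightarrow> del_at a (del_at b xs) = del_at (b - 1) (del_at a xs)"
  by (rule nth_equalityI) (auto simp: nth_del_at)

lemma del_at_del_at_Suc: "del_at a (del_at (Suc a) xs) = take a xs @ drop (Suc (Suc a)) xs"
  unfolding del_at_def by (simp add: min_def)

lemma del_at_neq:
  assumes "a < b" "b < length xs" "xs ! a \<noteq> xs ! Suc a"
  shows "del_at a xs \<noteq> del_at b xs"
proof -
  have "del_at a xs ! a = xs ! Suc a" "del_at b xs ! a = xs ! a"
    using assms(1,2) by (auto simp: nth_del_at)
  then show ?thesis using assms(3) by metis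
qed

lemma subseq_Suc_length_obtains_del_at:
  "subseq xs ys \<Longrightarrow> length ys = Suc (length xs) \<Longrightarrow> \<exists>i<length ys. xs = del_at i ys"
proof (induction ys arbitrary: xs)
  case Nil
  then show ?case by simp
next
  case (Cons y ys)
  show ?case
  proof (cases "subseq xs ys")
    case True
    then have "xs = ys" using Cons.prems by (simp add: subseq_same_length)
    then show ?thesis by (auto simp: del_at_def intro!: exI[of _ 0])
  next
    case False
    then obtain xs' where "xs = y # xs'" "subseq xs' ys"
      using Cons.prems by (cases xs) (auto split: if_splits)
    moreover obtain i where "i < length ys" "xs' = del_at i ys"
      using Cons.IH Cons.prems calculation by auto
    ultimately have "Suc i < length (y # ys)" "xs = del_at (Suc i) (y # ys)"
      by (simp_all add: del_at_def)
    then show ?thesis by blast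
  qed
qed

lemma subseq_chain_obtains_del_at_del_at:
  assumes "subseq \<beta> \<gamma>" "subseq \<gamma> \<alpha>"
    and "length \<gamma> = Suc (length \<beta>)" "length \<alpha> = Suc (length \<gamma>)"
  obtains a b where "a < b" "b < length \<alpha>" "\<beta> = del_at a (del_at b \<alpha>)"
    "\<gamma> = del_at a \<alpha> \<or> \<gamma> = del_at b \<alpha>"
proof -
  obtain i where i: "i < length \<alpha>" "\<gamma> = del_at i \<alpha>"
    using subseq_Suc_length_obtains_del_at[OF assms(2,4)] by blast
  obtain j where j: "j < length \<gamma>" "\<beta> = del_at j \<gamma>"
    using subseq_Suc_length_obtains_del_at[OF assms(1,3)] by blast
  show ?thesis
  proof (cases "j < i")
    case True
    moreover have "\<beta> = del_at j (del_at i \<alpha>)" using i(2) j(2) by simp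
    ultimately show ?thesis using that i by blast
  next
    case False
    moreover have "Suc j < length \<alpha>" using j(1) assms(4) by simp
    ultimately have "\<beta> = del_at i (del_at (Suc j) \<alpha>)"
      using i(2) j(2) del_at_del_at[of i "Suc j" \<alpha>] by simp
    moreover have "i < Suc j" "Suc j < length \<alpha>" using False j(1) assms(4) by simp_all
    ultimately show ?thesis using that i(2) by blast
  qed
qed

lemma allowed_path_del_at:
  assumes "allowed_path V E (Suc k) xs" "i \<le> Suc k"
    and "0 < i \<Longrightarrow> i < Suc k \<Longrightarrow> (xs ! (i - 1), xs ! Suc i) \<in> E"
  shows "allowed_path V E k (del_at i xs)"
proof -
  have len: "length xs = Suc (Suc k)" and edge: "\<And>j. j < Suc k \<Longrightarrow> (xs ! j, xs ! Suc j) \<in> E"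
    using assms(1) by (auto simp: allowed_path_def)
  have "set (del_at i xs) \<subseteq> set xs"
    unfolding del_at_def using set_take_subset set_drop_subset by fastforce
  moreover have "(del_at i xs ! j, del_at i xs ! Suc j) \<in> E" if "j < k" for j
  proof -
    consider "Suc j < i" | "Suc j = i" | "i \<le> j" by linarith
    then show ?thesis
      using edge[of j] edge[of "Suc j"] assms(3) that len by cases (auto simp: nth_del_at)
  qed
  ultimately show ?thesis
    using assms(1,2) len by (auto simp: allowed_path_def)
qed

lemma allowed_path_del_at_if_nonadjacent:
  assumes "allowed_path V E (Suc (Suc k)) xs" "allowed_path V E k (del_at a (del_at b xs))"
    and "Suc a < b" "b < length xs"
  shows "allowed_path V E (Suc k) (del_at a xs)" "allowed_path V E (Suc k) (del_at b xs)"
proof -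
  let ?ys = "del_at a (del_at b xs)"
  have len: "length xs = Suc (Suc (Suc k))"
    using assms(1) by (simp add: allowed_path_def)
  have edge: "\<And>j. j < k \<Longrightarrow> (?ys ! j, ?ys ! Suc j) \<in> E"
    using assms(2) by (simp add: allowed_path_def)
  show "allowed_path V E (Suc k) (del_at a xs)"
  proof (rule allowed_path_del_at[OF assms(1)])
    show "a \<le> Suc (Suc k)" using assms(3,4) len by simp
    assume "0 < a"
    then have "a - 1 < k" "?ys ! (a - 1) = xs ! (a - 1)" "?ys ! Suc (a - 1) = xs ! Suc a"
      using assms(3,4) len by (auto simp: nth_del_at)
    then show "(xs ! (a - 1), xs ! Suc a) \<in> E" using edge by metis
  qed
  show "allowed_path V E (Suc k) (del_at b xs)"
  proof (rule allowed_path_del_at[OF assms(1)])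
    show "b \<le> Suc (Suc k)" using assms(4) len by simp
    assume "b < Suc (Suc k)"
    moreover have "Suc (b - 2) = b - 1" "Suc (Suc (b - 2)) = b" using assms(3) by auto
    ultimately have "b - 2 < k" "?ys ! (b - 2) = xs ! (b - 1)" "?ys ! Suc (b - 2) = xs ! Suc b"
      using assms(3) len by (auto simp: nth_del_at)
    then show "(xs ! (b - 1), xs ! Suc b) \<in> E" using edge by metis
  qed
qed

lemma exists_intermediate_path_neq:
  assumes "digraph V E" "allowed_path V E (Suc (Suc k)) xs"
    and "allowed_path V E k (del_at a (del_at b xs))" "Suc a < b" "b < length xs"
  shows "\<exists>\<gamma>'. allowed_path V E (Suc k) \<gamma>' \<and> \<gamma>' \<noteq> \<gamma> \<and> path_less \<gamma>' xs
           \<and> path_less (del_at a (del_at b xs)) \<gamma>'"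
proof -
  have "(xs ! a, xs ! Suc a) \<in> E"
    using assms(2,4,5) by (simp add: allowed_path_def)
  then have "xs ! a \<noteq> xs ! Suc a"
    using assms(1) by (auto simp: digraph_def)
  then have "del_at a xs \<noteq> del_at b xs"
    using del_at_neq[of a b xs] assms(4,5) by simp
  then obtain \<gamma>' where \<gamma>': "\<gamma>' \<in> {del_at a xs, del_at b xs}" "\<gamma>' \<noteq> \<gamma>"
    by blast
  have "path_less (del_at a (del_at b xs)) (del_at b xs)"
    using assms(4,5) by (intro path_less_del_at) simp
  moreover have "path_less (del_at a (del_at b xs)) (del_at a xs)"
    unfolding del_at_del_at[OF Suc_lessD[OF assms(4)] assms(5)]
    using assms(4,5) by (intro path_less_del_at) simp
  moreover have "path_less \<gamma>' xs"
    using \<gamma>'(1) assms(4,5) path_less_del_at by auto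
  moreover have "allowed_path V E (Suc k) \<gamma>'"
    using allowed_path_del_at_if_nonadjacent[OF assms(2-5)] \<gamma>'(1) by auto
  ultimately show ?thesis using \<gamma>' by blast
qed

theorem lemma2p2:
  fixes V :: "'a set" and E :: "('a \<times> 'a) set" and n :: nat
    and \<alpha> \<gamma> \<beta> :: "'a list"
  assumes "digraph V E"
    and "n \<ge> 1"
    and "allowed_path V E (n + 1) \<alpha>"
    and "allowed_path V E n \<gamma>"
    and "allowed_path V E (n - 1) \<beta>"
    and "path_less \<gamma> \<alpha>" and "path_less \<beta> \<gamma>"
    and "\<not> (hd \<alpha> = hd \<gamma> \<and> hd \<gamma> = hd \<beta>) \<or> \<not> (last \<alpha> = last \<gamma> \<and> last \<gamma> = last \<beta>)"
  shows "(\<exists>\<gamma>'. allowed_path V E n \<gamma>' \<and> \<gamma>' \<noteq> \<gamma> \<and> path_less \<gamma>' \<alpha> \<and> path_less \<beta> \<gamma>')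
         \<or> \<beta> = drop 2 \<alpha> \<or> \<beta> = take n \<alpha>"
proof -
  have len: "length \<alpha> = Suc (Suc n)" "length \<gamma> = Suc n" "length \<beta> = n"
    using assms(3-5) \<open>n \<ge> 1\<close> by (auto simp: allowed_path_def)
  obtain a b where ab: "a < b" "b < length \<alpha>" and \<beta>: "\<beta> = del_at a (del_at b \<alpha>)"
    and \<gamma>: "\<gamma> = del_at a \<alpha> \<or> \<gamma> = del_at b \<alpha>"
    using subseq_chain_obtains_del_at_del_at assms(6,7) len by (metis path_less_def)
  consider (nonadjacent) "Suc a < b" | (adjacent) "b = Suc a"
    using ab(1) by linarith
  then show ?thesis
  proof cases
    case nonadjacent
    have n: "Suc (n - 1) = n" using \<open>n \<ge> 1\<close> by simp
    have "allowed_path V E (Suc (Suc (n - 1))) \<alpha>" using assms(3) n by simp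
    from exists_intermediate_path_neq[OF assms(1) this assms(5)[unfolded \<beta>] nonadjacent ab(2)]
    show ?thesis unfolding n \<beta> by blast
  next
    case adjacent
    then have \<beta>_eq: "\<beta> = take a \<alpha> @ drop (Suc (Suc a)) \<alpha>"
      using \<beta> del_at_del_at_Suc by simp
    consider (first_edge) "a = 0" | (last_edge) "a = n" | (inner_edge) "0 < a" "a < n"
      using ab adjacent len by linarith
    then show ?thesis
    proof cases
      case first_edge
      then show ?thesis using \<beta>_eq by (simp add: numeral_2_eq_2)
    next
      case last_edge
      then show ?thesis using \<beta>_eq len by simp
    next
      case inner_edge
      have "hd \<gamma> = hd \<alpha>" "hd \<beta> = hd \<alpha>"
        using \<gamma> \<beta> \<open>0 < a\<close> ab(1) by (auto simp: hd_del_at)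
      moreover have "last \<gamma> = last \<alpha>" "last \<beta> = last \<alpha>"
        using \<gamma> \<beta> \<open>a < n\<close> adjacent len by (auto simp: last_del_at)
      ultimately show ?thesis using assms(8) by simp
    qed
  qed
qed

end
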